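(* Let $G$ be a 3-connected graph. If $G$ is 3-colourable, then the $G_3^0$-blocked graph of $G$ is the overlap graph of a family of subtrees of a tree with exactly 3 leaves.
   Context: Two sets $a,b$ overlap if $a\cap b\neq\emptyset$, $a\setminus b\neq\emptyset$, $b\setminus a\neq\emptyset$; the overlap graph of a family of subtrees (nonempty connected node sets) of a tree has one vertex per subtree, two being adjacent iff their subtrees overlap. $G_3^0$: vertices $v_s,v_b$ joined by 3 internally disjoint three-vertex paths $v_s-x_i-v_b$, no other edges. The $G_d^u$-blocked graph $G''$ of $G$ (here $d=3,u=0$): let $G'=(V',E')$ be the disjoint union of six copies of $G$. The vertex set of $G''$ is $V_1\cup V_2\cup V_3\cup V_4$ (pairwise disjoint), where $V_1=V'$ (vertex-representatives), $V_2$ contains one new vertex for each edge of $E'$ (edge-representatives), $V_3=\{f(v): v\in V_1\}$ is a set of new vertices in bijection $f$ with $V_1$ (brothers), and $V_4$ is the vertex set of a copy of $G_d^u$. Edges of $G''$: $v\in V_1$ is adjacent to the edge-representative of $e\in E'$ iff $v$ is an endpoint of $e$; $V_2\cup V_3$ is a clique; each $v\in V_1$ is adjacent to $f(v)$; every vertex of $V_2\cup V_3$ is adjacent to $v_s$ and $v_b$; the edges of $G_d^u$; no other edges. *)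

theory Defs
  imports Main
begin

definition graph :: "'a set \<Rightarrow> ('a \<Rightarrow> 'a \<Rightarrow> bool) \<Rightarrow> bool" where
  "graph V E \<longleftrightarrow> finite V \<and> (\<forall>u v. E u v \<longrightarrow> u \<in> V \<and> v \<in> V \<and> u \<noteq> v \<and> E v u)"

definition connected_on :: "('a \<Rightarrow> 'a \<Rightarrow> bool) \<Rightarrow> 'a set \<Rightarrow> bool" where
  "connected_on E S \<longleftrightarrow> S \<noteq> {} \<and>
     (\<forall>u\<in>S. \<forall>v\<in>S. (\<lambda>x y. x \<in> S \<and> y \<in> S \<and> E x y)\<^sup>*\<^sup>* u v)"

definition three_connected :: "'a set \<Rightarrow> ('a \<Rightarrow> 'a \<Rightarrow> bool) \<Rightarrow> bool" where
  "three_connected V E \<longleftrightarrow> card V > 3 \<and>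
     (\<forall>X. X \<subseteq> V \<and> card X < 3 \<longrightarrow> connected_on E (V - X))"

definition three_colourable :: "'a set \<Rightarrow> ('a \<Rightarrow> 'a \<Rightarrow> bool) \<Rightarrow> bool" where
  "three_colourable V E \<longleftrightarrow>
     (\<exists>c :: 'a \<Rightarrow> nat. (\<forall>v\<in>V. c v < 3) \<and> (\<forall>u\<in>V. \<forall>v\<in>V. E u v \<longrightarrow> c u \<noteq> c v))"

definition has_cycle :: "'b set \<Rightarrow> ('b \<Rightarrow> 'b \<Rightarrow> bool) \<Rightarrow> bool" where
  "has_cycle N E \<longleftrightarrow> (\<exists>cs. length cs \<ge> 3 \<and> distinct cs \<and> set cs \<subseteq> N \<and>
     (\<forall>i < length cs. E (cs ! i) (cs ! ((i + 1) mod length cs))))"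

definition tree :: "'b set \<Rightarrow> ('b \<Rightarrow> 'b \<Rightarrow> bool) \<Rightarrow> bool" where
  "tree N E \<longleftrightarrow> graph N E \<and> connected_on E N \<and> \<not> has_cycle N E"

definition leaves :: "'b set \<Rightarrow> ('b \<Rightarrow> 'b \<Rightarrow> bool) \<Rightarrow> 'b set" where
  "leaves N E = {v \<in> N. card {u \<in> N. E v u} = 1}"

definition subtree :: "'b set \<Rightarrow> ('b \<Rightarrow> 'b \<Rightarrow> bool) \<Rightarrow> 'b set \<Rightarrow> bool" where
  "subtree N E X \<longleftrightarrow> X \<subseteq> N \<and> connected_on E X"

definition overlap :: "'b set \<Rightarrow> 'b set \<Rightarrow> bool" where
  "overlap a b \<longleftrightarrow> a \<inter> b \<noteq> {} \<and> a - b \<noteq> {} \<and> b - a \<noteq> {}"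

text \<open>Vertices: VR i v (vertex-representative of v in copy i < 6),
ER i {u,v} (edge-representative of edge uv in copy i), Br i v (brother f(VR i v)),
and the vertices VS, VB, XP j (j < 3) of the copy of G_3^0.\<close>
datatype 'a bv = VR nat 'a | ER nat "'a set" | Br nat 'a | VS | VB | XP nat

definition bverts :: "'a set \<Rightarrow> ('a \<Rightarrow> 'a \<Rightarrow> bool) \<Rightarrow> 'a bv set" where
  "bverts V E =
     {VR i v | i v. i < 6 \<and> v \<in> V} \<union>
     {ER i {u, v} | i u v. i < 6 \<and> E u v} \<union>
     {Br i v | i v. i < 6 \<and> v \<in> V} \<union>
     {VS, VB} \<union> {XP j | j. j < 3}"

definition is_V23 :: "'a bv \<Rightarrow> bool" where
  "is_V23 x \<longleftrightarrow> (\<exists>i e. x = ER i e) \<or> (\<exists>i v. x = Br i v)"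

definition bbase :: "'a bv \<Rightarrow> 'a bv \<Rightarrow> bool" where
  "bbase x y \<longleftrightarrow>
     (\<exists>i v e. x = VR i v \<and> y = ER i e \<and> v \<in> e) \<or>
     (is_V23 x \<and> is_V23 y \<and> x \<noteq> y) \<or>
     (\<exists>i v. x = VR i v \<and> y = Br i v) \<or>
     (is_V23 x \<and> (y = VS \<or> y = VB)) \<or>
     (\<exists>j. x = VS \<and> y = XP j) \<or>
     (\<exists>j. x = XP j \<and> y = VB)"

definition badj :: "'a set \<Rightarrow> ('a \<Rightarrow> 'a \<Rightarrow> bool) \<Rightarrow> 'a bv \<Rightarrow> 'a bv \<Rightarrow> bool" where
  "badj V E x y \<longleftrightarrow> x \<in> bverts V E \<and> y \<in> bverts V E \<and> (bbase x y \<or> bbase y x)"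

end

(*
  The tree is a spider with three legs of length L. Besides the segments of a single leg, its
  subtrees include the stars S(a): the nodes of depth at most a k on each leg k. Two stars overlap
  iff their vectors are incomparable, and S(a) overlaps the segment [d, d + 1] of leg k iff a k = d.

  Fix a proper colouring c with colours 0, 1, 2. Each vertex-representative v gets a segment at its
  own depth on leg c v, and v_s, v_b get the legs 0 and 1. Each edge- or brother-representative gets
  a star whose coordinate on leg c w is the depth of w, for each of its neighbours w among the
  vertex-representatives (the ends of an edge have distinct colours); the remaining coordinates are
  large fillers making all these vectors sum to the same total. Equal sums make the stars pairwise
  incomparable, so the edge- and brother-representatives form a clique, and the middle vertices of
  the three paths become small stars reaching legs 0 and 1 and nested with all other stars.
*)
theory Submission
  imports Defs
begin

lemma connected_on_descent:
  fixes h :: "'b \<Rightarrow> nat"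
  assumes sym: "\<And>x y. E x y \<Longrightarrow> E y x" and r: "r \<in> X"
    and descent: "\<And>x. x \<in> X \<Longrightarrow> x \<noteq> r \<Longrightarrow> \<exists>y\<in>X. E x y \<and> h y < h x"
  shows "connected_on E X"
proof -
  define R where "R = (\<lambda>x y. x \<in> X \<and> y \<in> X \<and> E x y)"
  have to_root: "x \<in> X \<Longrightarrow> R\<^sup>*\<^sup>* x r" for x
  proof (induction x rule: measure_induct_rule[where f = h])
    case (less x)
    show ?case
    proof (cases "x = r")
      case False
      then obtain y where "y \<in> X" "E x y" "h y < h x" using descent less.prems by blast
      then have "R x y" "R\<^sup>*\<^sup>* y r" using less unfolding R_def by auto
      then show ?thesis by (rule converse_rtranclp_into_rtranclp)
    qed simp
  qed
  have "R\<inverse>\<inverse> = R" unfolding R_def by (auto intro!: ext sym)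
  then have from_root: "x \<in> X \<Longrightarrow> R\<^sup>*\<^sup>* r x" for x
    using rtranclp_converseI[OF to_root[of x]] by simp
  have "R\<^sup>*\<^sup>* u v" if "u \<in> X" "v \<in> X" for u v
    using rtranclp_trans[OF to_root[OF that(1)] from_root[OF that(2)]] .
  then show ?thesis using r unfolding connected_on_def R_def by blast
qed

lemma not_has_cycle_parent_edges:
  fixes h :: "'b \<Rightarrow> nat"
  assumes parent_edge: "\<And>x y. E x y \<Longrightarrow> (x = p y \<and> h x < h y) \<or> (y = p x \<and> h y < h x)"
  shows "\<not> has_cycle N E"
proof
  assume "has_cycle N E"
  then obtain cs where len: "length cs \<ge> 3" and dist: "distinct cs"
    and adj: "\<And>i. i < length cs \<Longrightarrow> E (cs ! i) (cs ! ((i + 1) mod length cs))"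
    unfolding has_cycle_def by blast
  define l where "l = length cs"
  obtain m where m: "m < l" and top: "\<And>i. i < l \<Longrightarrow> h (cs ! i) \<le> h (cs ! m)"
  proof -
    have fin: "finite (h ` set cs)" by simp
    have "h ` set cs \<noteq> {}" using len by auto
    then have "Max (h ` set cs) \<in> h ` set cs" using fin by (rule Max_in[rotated])
    then obtain x where x: "x \<in> set cs" "h x = Max (h ` set cs)" by (rule imageE) simp
    then obtain m where "m < l" "cs ! m = x" unfolding l_def by (metis in_set_conv_nth)
    moreover have "h (cs ! i) \<le> h x" if "i < l" for i
      unfolding x(2) using that fin by (simp add: l_def)
    ultimately show thesis using that by blast
  qed
  define prev where "prev = (if m = 0 then l - 1 else m - 1)"
  define succ where "succ = (m + 1) mod l"
  have "prev < l" "succ < l" "(prev + 1) mod l = m"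
    using m len by (auto simp: prev_def succ_def l_def intro: mod_less_divisor)
  have below: "cs ! i = p (cs ! m)" if "i < l" and "E (cs ! i) (cs ! m) \<or> E (cs ! m) (cs ! i)" for i
    using that parent_edge top[of i] by fastforce
  have "cs ! prev = cs ! succ"
    using below[of prev] below[of succ] adj[of prev] adj[of m] \<open>prev < l\<close> \<open>succ < l\<close>
      \<open>(prev + 1) mod l = m\<close> m
    unfolding succ_def l_def by auto
  moreover have "prev \<noteq> succ" using m len unfolding prev_def succ_def l_def
    by (cases "m + 1 = length cs") auto
  ultimately show False using dist \<open>prev < l\<close> \<open>succ < l\<close> by (simp add: nth_eq_iff_index_eq l_def)
qed

(* Node 3 * d + k with d \<ge> 1 and k < 3 lies at depth d on leg k; node 0 is the centre. *)
definition spider_nodes :: "nat \<Rightarrow> nat set" where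
  "spider_nodes L = insert 0 {n. 3 \<le> n \<and> n div 3 \<le> L}"

definition spider_parent :: "nat \<Rightarrow> nat" where
  "spider_parent n = (if n < 6 then 0 else n - 3)"

definition spider_edge :: "nat \<Rightarrow> nat \<Rightarrow> nat \<Rightarrow> bool" where
  "spider_edge L x y \<longleftrightarrow> x \<in> spider_nodes L \<and> y \<in> spider_nodes L \<and>
     (x \<noteq> 0 \<and> y = spider_parent x \<or> y \<noteq> 0 \<and> x = spider_parent y)"

lemma spider_parent_same_leg:
  assumes "spider_parent n \<noteq> 0"
  shows "spider_parent n mod 3 = n mod 3 \<and> Suc (spider_parent n div 3) = n div 3"
proof -
  obtain m where "n = m + 3" "spider_parent n = m"
    using assms by (intro that[of "n - 3"]) (auto simp: spider_parent_def split: if_splits)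
  then show ?thesis by simp
qed

lemma spider_parent_in_nodes:
  assumes "n \<in> spider_nodes L"
  shows "spider_parent n \<in> spider_nodes L"
proof (cases "n < 6")
  case False
  then obtain m where "n = m + 3" "3 \<le> m" by (intro that[of "n - 3"]) auto
  then show ?thesis using assms by (simp add: spider_nodes_def spider_parent_def)
qed (simp add: spider_parent_def spider_nodes_def)

lemma spider_parent_depth_less:
  assumes "n \<in> spider_nodes L" "n \<noteq> 0"
  shows "spider_parent n div 3 < n div 3"
  using assms spider_parent_same_leg[of n] by (cases "spider_parent n = 0") (auto simp: spider_nodes_def)

lemma spider_edge_sym: "spider_edge L x y \<Longrightarrow> spider_edge L y x"
  by (auto simp: spider_edge_def)

lemma spider_edge_parent:
  assumes "spider_edge L x y"
  shows "(x = spider_parent y \<and> x div 3 < y div 3) \<or> (y = spider_parent x \<and> y div 3 < x div 3)"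
  using assms spider_parent_depth_less unfolding spider_edge_def by blast

lemma spider_edge_to_parent:
  "n \<in> spider_nodes L \<Longrightarrow> n \<noteq> 0 \<Longrightarrow> spider_edge L n (spider_parent n)"
  using spider_parent_in_nodes unfolding spider_edge_def by blast

lemma graph_spider: "graph (spider_nodes L) (spider_edge L)"
proof -
  have "spider_nodes L \<subseteq> {..3 * L + 2}"
    using div_mult_mod_eq[of _ 3] mod_less_divisor[of 3] by (fastforce simp: spider_nodes_def)
  then have "finite (spider_nodes L)" by (rule finite_subset) simp
  moreover have "x \<noteq> y" if "spider_edge L x y" for x y
    using spider_edge_parent[OF that] by auto
  ultimately show ?thesis using spider_edge_sym unfolding graph_def spider_edge_def by blast
qed

definition spider_star :: "nat \<Rightarrow> (nat \<Rightarrow> nat) \<Rightarrow> nat set" where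
  "spider_star L a = {n \<in> spider_nodes L. n div 3 \<le> a (n mod 3)}"

definition leg_segment :: "nat \<Rightarrow> nat \<Rightarrow> nat \<Rightarrow> nat \<Rightarrow> nat set" where
  "leg_segment L k p q = {n \<in> spider_nodes L. n mod 3 = k \<and> p \<le> n div 3 \<and> n div 3 \<le> q}"

lemma subtree_spider_star: "subtree (spider_nodes L) (spider_edge L) (spider_star L a)"
  unfolding subtree_def
proof
  show "spider_star L a \<subseteq> spider_nodes L" by (auto simp: spider_star_def)
  show "connected_on (spider_edge L) (spider_star L a)"
  proof (rule connected_on_descent[where r = 0 and h = "\<lambda>n. n div 3"])
    show "0 \<in> spider_star L a" by (simp add: spider_star_def spider_nodes_def)
    fix n assume n: "n \<in> spider_star L a" "n \<noteq> 0"
    then have node: "n \<in> spider_nodes L" and depth: "n div 3 \<le> a (n mod 3)"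
      by (auto simp: spider_star_def)
    have "spider_parent n \<in> spider_star L a"
      using spider_parent_in_nodes[OF node] spider_parent_same_leg[of n] depth
      by (cases "spider_parent n = 0") (auto simp: spider_star_def)
    then show "\<exists>m\<in>spider_star L a. spider_edge L n m \<and> m div 3 < n div 3"
      using spider_edge_to_parent[OF node n(2)] spider_parent_depth_less[OF node n(2)] by blast
  qed (rule spider_edge_sym)
qed

lemma subtree_leg_segment:
  assumes "1 \<le> p" "p \<le> q" "q \<le> L" "k < 3"
  shows "subtree (spider_nodes L) (spider_edge L) (leg_segment L k p q)"
  unfolding subtree_def
proof
  show "leg_segment L k p q \<subseteq> spider_nodes L" by (auto simp: leg_segment_def)
  show "connected_on (spider_edge L) (leg_segment L k p q)"
  proof (rule connected_on_descent[where r = "3 * p + k" and h = "\<lambda>n. n div 3"])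
    show "3 * p + k \<in> leg_segment L k p q" using assms by (auto simp: leg_segment_def spider_nodes_def)
    fix n assume n: "n \<in> leg_segment L k p q" "n \<noteq> 3 * p + k"
    then have node: "n \<in> spider_nodes L" and leg: "n mod 3 = k" "p \<le> n div 3" "n div 3 \<le> q"
      by (auto simp: leg_segment_def)
    have "p < n div 3" using leg n(2) by (metis div_mult_mod_eq le_neq_implies_less mult.commute)
    then have "n \<noteq> 0" "spider_parent n \<noteq> 0" using assms by (auto simp: spider_parent_def)
    then have "spider_parent n \<in> leg_segment L k p q"
      using spider_parent_in_nodes[OF node] spider_parent_same_leg[of n] leg \<open>p < n div 3\<close>
      by (auto simp: leg_segment_def)
    then show "\<exists>m\<in>leg_segment L k p q. spider_edge L n m \<and> m div 3 < n div 3"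
      using spider_edge_to_parent[OF node] spider_parent_depth_less[OF node] \<open>n \<noteq> 0\<close> by blast
  qed (rule spider_edge_sym)
qed

lemma tree_spider: "tree (spider_nodes L) (spider_edge L)"
  unfolding tree_def
proof (intro conjI)
  have "spider_star L (\<lambda>_. L) = spider_nodes L" by (auto simp: spider_star_def spider_nodes_def)
  then show "connected_on (spider_edge L) (spider_nodes L)"
    using subtree_spider_star[of L "\<lambda>_. L"] by (simp add: subtree_def)
  show "\<not> has_cycle (spider_nodes L) (spider_edge L)"
    using spider_edge_parent by (rule not_has_cycle_parent_edges)
qed (rule graph_spider)

lemma spider_neighbours:
  assumes "n \<in> spider_nodes L"
  shows "{m \<in> spider_nodes L. spider_edge L n m} =
    (if n = 0 then (if L = 0 then {} else {3, 4, 5})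
     else insert (spider_parent n) (if n div 3 < L then {n + 3} else {}))"
  using assms spider_parent_in_nodes[OF assms]
  by (auto simp: spider_nodes_def spider_edge_def spider_parent_def)

lemma leaves_spider:
  assumes "1 \<le> L"
  shows "leaves (spider_nodes L) (spider_edge L) = {n \<in> spider_nodes L. n \<noteq> 0 \<and> n div 3 = L}"
proof -
  have "card {m \<in> spider_nodes L. spider_edge L n m} = 1 \<longleftrightarrow> n \<noteq> 0 \<and> n div 3 = L"
    if n: "n \<in> spider_nodes L" for n
  proof (cases "n = 0")
    case False
    have "spider_parent n \<noteq> n + 3" by (auto simp: spider_parent_def)
    moreover have "n div 3 \<le> L" using n by (auto simp: spider_nodes_def)
    ultimately show ?thesis using spider_neighbours[OF n] False by auto
  qed (use spider_neighbours[OF n] assms in auto)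
  then show ?thesis unfolding leaves_def by (intro Collect_cong) blast
qed

lemma card_leaves_spider:
  assumes "1 \<le> L"
  shows "card (leaves (spider_nodes L) (spider_edge L)) = 3"
proof -
  have "{n \<in> spider_nodes L. n \<noteq> 0 \<and> n div 3 = L} = {3 * L, 3 * L + 1, 3 * L + 2}"
    using assms by (auto simp: spider_nodes_def)
  then show ?thesis using leaves_spider[OF assms] by simp
qed

lemma overlap_commute: "overlap a b \<longleftrightarrow> overlap b a"
  unfolding overlap_def by blast

lemma spider_node_at: "1 \<le> d \<Longrightarrow> d \<le> L \<Longrightarrow> k < 3 \<Longrightarrow> 3 * d + k \<in> spider_nodes L"
  by (simp add: spider_nodes_def)

lemma spider_star_diff_nonempty:
  assumes "\<forall>k<3. a k \<le> L"
  shows "spider_star L a - spider_star L b \<noteq> {} \<longleftrightarrow> (\<exists>k<3. b k < a k)"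
proof
  assume "spider_star L a - spider_star L b \<noteq> {}"
  then obtain n where "n \<in> spider_star L a" "n \<notin> spider_star L b" by auto
  then show "\<exists>k<3. b k < a k" by (intro exI[of _ "n mod 3"]) (auto simp: spider_star_def)
next
  assume "\<exists>k<3. b k < a k"
  then obtain k where k: "k < 3" "b k < a k" by blast
  then have "3 * a k + k \<in> spider_star L a - spider_star L b"
    using assms spider_node_at[of "a k" L k] by (simp add: spider_star_def)
  then show "spider_star L a - spider_star L b \<noteq> {}" by blast
qed

lemma overlap_spider_stars:
  assumes "\<forall>k<3. a k \<le> L" "\<forall>k<3. b k \<le> L"
  shows "overlap (spider_star L a) (spider_star L b) \<longleftrightarrow> (\<exists>k<3. a k < b k) \<and> (\<exists>k<3. b k < a k)"
proof -
  have "0 \<in> spider_star L a \<inter> spider_star L b" by (simp add: spider_star_def spider_nodes_def)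
  then show ?thesis unfolding overlap_def
    using spider_star_diff_nonempty[OF assms(1), of b] spider_star_diff_nonempty[OF assms(2), of a] by blast
qed

lemma overlap_spider_star_leg_segment:
  assumes "1 \<le> p" "p \<le> q" "q \<le> L" "k < 3"
  shows "overlap (spider_star L a) (leg_segment L k p q) \<longleftrightarrow> p \<le> a k \<and> a k < q"
proof -
  have at: "3 * d + k \<in> spider_nodes L" "(3 * d + k) div 3 = d" "(3 * d + k) mod 3 = k"
    if "p \<le> d" "d \<le> q" for d
    using that assms spider_node_at[of d L k] by auto
  have "0 \<in> spider_star L a - leg_segment L k p q"
    using assms by (simp add: spider_star_def spider_nodes_def leg_segment_def)
  moreover have "spider_star L a \<inter> leg_segment L k p q \<noteq> {} \<longleftrightarrow> p \<le> a k"
  proof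
    assume "p \<le> a k"
    then have "3 * p + k \<in> spider_star L a \<inter> leg_segment L k p q"
      using at[of p] assms by (simp add: spider_star_def leg_segment_def)
    then show "spider_star L a \<inter> leg_segment L k p q \<noteq> {}" by blast
  qed (auto simp: spider_star_def leg_segment_def)
  moreover have "leg_segment L k p q - spider_star L a \<noteq> {} \<longleftrightarrow> a k < q"
  proof
    assume "a k < q"
    then have "3 * q + k \<in> leg_segment L k p q - spider_star L a"
      using at[of q] assms by (simp add: spider_star_def leg_segment_def)
    then show "leg_segment L k p q - spider_star L a \<noteq> {}" by blast
  qed (auto simp: spider_star_def leg_segment_def)
  ultimately show ?thesis unfolding overlap_def by blast
qed

lemma not_overlap_leg_segments:
  assumes "k \<noteq> k' \<or> q < p' \<or> q' < p \<or> (p' \<le> p \<and> q \<le> q') \<or> (p \<le> p' \<and> q' \<le> q)"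
  shows "\<not> overlap (leg_segment L k p q) (leg_segment L k' p' q')"
  using assms unfolding overlap_def leg_segment_def by auto

lemma sum_eq_ex_less:
  fixes a b :: "'i \<Rightarrow> 'b :: {ordered_cancel_comm_monoid_add, linorder}"
  assumes "finite A" "sum a A = sum b A" "\<exists>k\<in>A. a k \<noteq> b k"
  shows "\<exists>k\<in>A. a k < b k"
proof (rule ccontr)
  assume "\<not> (\<exists>k\<in>A. a k < b k)"
  then have "\<forall>k\<in>A. b k \<le> a k" "\<exists>k\<in>A. b k < a k"
    using assms(3) by (auto simp: not_less order.order_iff_strict)
  then have "sum b A < sum a A" using assms(1) by (rule sum_strict_mono_ex1[rotated])
  then show False using assms(2) by simp
qed

lemma sum_lessThan_3: "(\<Sum>k<(3::nat). f k) = f 0 + f 1 + (f 2 :: 'b :: comm_monoid_add)"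
  by (simp add: eval_nat_numeral add.assoc)

lemma sum_if_two_distinct:
  fixes x y z :: "'b :: comm_monoid_add"
  assumes "a < 3" "b < (3::nat)" "a \<noteq> b"
  shows "(\<Sum>k<3. if k = a then x else if k = b then y else z) = x + y + z"
proof -
  have "a = 0 \<or> a = 1 \<or> a = 2" "b = 0 \<or> b = 1 \<or> b = 2" using assms(1,2) by auto
  then show ?thesis using assms(3) by (elim disjE) (simp_all add: sum_lessThan_3 ac_simps)
qed

locale numbered_coloured_graph =
  fixes V :: "'a set" and E :: "'a \<Rightarrow> 'a \<Rightarrow> bool" and c :: "'a \<Rightarrow> nat" and g :: "'a \<Rightarrow> nat"
  assumes graph: "graph V E"
    and colour_lt: "v \<in> V \<Longrightarrow> c v < 3"
    and colouring_proper: "u \<in> V \<Longrightarrow> v \<in> V \<Longrightarrow> E u v \<Longrightarrow> c u \<noteq> c v"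
    and numbering_inj: "inj_on g V"
    and numbering_lt: "v \<in> V \<Longrightarrow> g v < card V"
begin

(* Distinct vertex-representatives get distinct odd depths, so their segments are disjoint. *)
definition depth :: "nat \<Rightarrow> 'a \<Rightarrow> nat" where
  "depth i v = 12 * g v + 2 * i + 3"

definition depth_bound :: nat where
  "depth_bound = 12 * card V + 2"

definition leg_length :: nat where
  "leg_length = 3 * depth_bound + 1"

definition edge_vec :: "nat \<Rightarrow> 'a set \<Rightarrow> nat \<Rightarrow> nat" where
  "edge_vec i e k = (if \<exists>w\<in>e. c w = k then \<Sum>w\<in>{w\<in>e. c w = k}. depth i w
     else 3 * depth_bound - (\<Sum>w\<in>e. depth i w))"

definition brother_vec :: "nat \<Rightarrow> 'a \<Rightarrow> nat \<Rightarrow> nat" where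
  "brother_vec i v k = (if k = c v then depth i v else if k = (c v + 1) mod 3 then depth_bound
     else 3 * depth_bound - depth i v - depth_bound)"

(* Coordinates at most 2, below every coordinate of an edge or brother star (at least 3). *)
definition path_vec :: "nat \<Rightarrow> nat \<Rightarrow> nat" where
  "path_vec j k = (if k = 2 then j else 1)"

definition star_vec :: "'a bv \<Rightarrow> nat \<Rightarrow> nat" where
  "star_vec x = (case x of ER i e \<Rightarrow> edge_vec i e | Br i v \<Rightarrow> brother_vec i v
     | XP j \<Rightarrow> path_vec j | _ \<Rightarrow> (\<lambda>_. 0))"

definition rep :: "'a bv \<Rightarrow> nat set" where
  "rep x = (case x of
      VR i v \<Rightarrow> leg_segment leg_length (c v) (depth i v) (depth i v + 1)
    | VS \<Rightarrow> leg_segment leg_length 0 1 leg_length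
    | VB \<Rightarrow> leg_segment leg_length 1 1 leg_length
    | _ \<Rightarrow> spider_star leg_length (star_vec x))"

definition is_star_vertex :: "'a bv \<Rightarrow> bool" where
  "is_star_vertex x \<longleftrightarrow> is_V23 x \<or> (\<exists>j. x = XP j)"

lemma depth_bounds: "v \<in> V \<Longrightarrow> i < 6 \<Longrightarrow> 3 \<le> depth i v \<and> depth i v < depth_bound"
  using numbering_lt[of v] by (simp add: depth_def depth_bound_def)

lemma depth_eq_iff:
  assumes "v \<in> V" "w \<in> V" "i < 6" "j < 6"
  shows "depth i v = depth j w \<longleftrightarrow> i = j \<and> v = w"
proof
  assume "depth i v = depth j w"
  then have "6 * g v + i = 6 * g w + j" by (simp add: depth_def)
  then have "i = j \<and> g v = g w" using assms(3,4) by presburger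
  then show "i = j \<and> v = w" using numbering_inj assms(1,2) by (auto dest: inj_onD)
qed simp

lemma edge_vec_eq:
  assumes "c u \<noteq> c w"
  shows "edge_vec i {u, w} k =
    (if k = c u then depth i u else if k = c w then depth i w else 3 * depth_bound - depth i u - depth i w)"
proof -
  consider "k = c u" | "k = c w" | "k \<noteq> c u" "k \<noteq> c w" by blast
  then show ?thesis
  proof cases
    case 1
    then have "{x \<in> {u, w}. c x = k} = {u}" using assms by auto
    then show ?thesis using 1 unfolding edge_vec_def by auto
  next
    case 2
    then have "{x \<in> {u, w}. c x = k} = {w}" using assms by auto
    then show ?thesis using 2 assms unfolding edge_vec_def by auto
  next
    case 3
    have "u \<noteq> w" using assms by blast
    then show ?thesis using 3 unfolding edge_vec_def by auto
  qed
qed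

lemma V23_cases:
  assumes "x \<in> bverts V E" "is_V23 x"
  obtains (edge) i u w where "x = ER i {u, w}" "i < 6" "u \<in> V" "w \<in> V" "c u \<noteq> c w"
    | (brother) i v where "x = Br i v" "i < 6" "v \<in> V"
proof -
  have "E u w \<Longrightarrow> u \<in> V \<and> w \<in> V \<and> c u \<noteq> c w" for u w
    using graph colouring_proper unfolding graph_def by blast
  then show thesis using assms that unfolding bverts_def is_V23_def by auto
qed

lemma colour_cases: "v \<in> V \<Longrightarrow> c v = 0 \<or> c v = 1 \<or> c v = 2"
  using colour_lt[of v] by auto

lemma V23_star_vec_coords:
  assumes "x \<in> bverts V E" "is_V23 x"
  shows "(\<forall>k<3. 3 \<le> star_vec x k \<and> star_vec x k \<le> 3 * depth_bound) \<and>
    (\<Sum>k<3. star_vec x k) = 3 * depth_bound"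
  using assms
proof (cases rule: V23_cases)
  case (edge i u w)
  have vec: "star_vec x k = (if k = c u then depth i u else if k = c w then depth i w
      else 3 * depth_bound - depth i u - depth i w)" for k
    using edge edge_vec_eq by (simp add: star_vec_def)
  have small: "3 \<le> depth i u" "depth i u < depth_bound" "3 \<le> depth i w" "depth i w < depth_bound"
    using depth_bounds edge by auto
  have "\<forall>k<3. 3 \<le> star_vec x k \<and> star_vec x k \<le> 3 * depth_bound"
  proof (intro allI impI)
    fix k
    have "star_vec x k \<in> {depth i u, depth i w, 3 * depth_bound - depth i u - depth i w}" by (simp add: vec)
    then show "3 \<le> star_vec x k \<and> star_vec x k \<le> 3 * depth_bound" using small by auto
  qed
  have "(\<Sum>k<3. star_vec x k) = depth i u + depth i w + (3 * depth_bound - depth i u - depth i w)"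
    unfolding vec using colour_lt edge by (intro sum_if_two_distinct) auto
  then show ?thesis using small \<open>\<forall>k<3. _\<close> by simp
next
  case (brother i v)
  have vec: "star_vec x = brother_vec i v" using brother by (simp add: star_vec_def)
  have small: "3 \<le> depth i v" "depth i v < depth_bound" using depth_bounds brother by auto
  have "\<forall>k<3. 3 \<le> star_vec x k \<and> star_vec x k \<le> 3 * depth_bound"
  proof (intro allI impI)
    fix k
    have "star_vec x k \<in> {depth i v, depth_bound, 3 * depth_bound - depth i v - depth_bound}"
      by (simp add: vec brother_vec_def)
    then show "3 \<le> star_vec x k \<and> star_vec x k \<le> 3 * depth_bound" using small by auto
  qed
  have "(\<Sum>k<3. star_vec x k) = depth i v + depth_bound + (3 * depth_bound - depth i v - depth_bound)"
    unfolding vec brother_vec_def using colour_lt brother colour_cases[OF brother(3)]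
    by (intro sum_if_two_distinct) auto
  then show ?thesis using small \<open>\<forall>k<3. _\<close> by simp
qed

lemma bbase_VR_ER: "bbase (VR i v) (ER j e) \<longleftrightarrow> i = j \<and> v \<in> e"
  by (auto simp: bbase_def is_V23_def)

lemma bbase_VR_Br: "bbase (VR i v) (Br j w) \<longleftrightarrow> i = j \<and> v = w"
  by (auto simp: bbase_def is_V23_def)

lemma V23_star_vec_eq_depth_iff:
  assumes "v \<in> V" "i < 6" "y \<in> bverts V E" "is_V23 y"
  shows "star_vec y (c v) = depth i v \<longleftrightarrow> bbase (VR i v) y"
  using assms(3,4)
proof (cases rule: V23_cases)
  case (edge j u w)
  have small: "depth i v < depth_bound" "depth j u < depth_bound" "depth j w < depth_bound"
    using depth_bounds edge assms(1,2) by auto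
  have vec: "star_vec y (c v) = (if c v = c u then depth j u else if c v = c w then depth j w
      else 3 * depth_bound - depth j u - depth j w)"
    using edge edge_vec_eq by (simp add: star_vec_def)
  consider "c v = c u" | "c v = c w" | "c v \<noteq> c u" "c v \<noteq> c w" by blast
  then show ?thesis
  proof cases
    case 1
    then show ?thesis using edge vec depth_eq_iff[of u v j i] assms(1,2) by (auto simp: bbase_VR_ER)
  next
    case 2
    then show ?thesis using edge vec depth_eq_iff[of w v j i] assms(1,2) by (auto simp: bbase_VR_ER)
  next
    case 3
    then show ?thesis using edge vec small by (auto simp: bbase_VR_ER)
  qed
next
  case (brother j w)
  have "depth i v < depth_bound" "depth j w < depth_bound" using depth_bounds brother assms(1,2) by auto
  then show ?thesis
    using brother depth_eq_iff[of w v j i] assms(1,2)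
    by (auto simp: star_vec_def brother_vec_def bbase_VR_Br)
qed

lemma V23_eq_if_same_VR_neighbours:
  assumes x: "x \<in> bverts V E" "is_V23 x" and y: "y \<in> bverts V E" "is_V23 y"
    and same: "\<And>i v. i < 6 \<Longrightarrow> v \<in> V \<Longrightarrow> bbase (VR i v) x \<longleftrightarrow> bbase (VR i v) y"
  shows "x = y"
  using x
proof (cases rule: V23_cases)
  case (edge i u w)
  show ?thesis
    using y
  proof (cases rule: V23_cases)
    case (edge j u' w')
    then show ?thesis
      using same[of i u] same[of i w] same[of j u'] same[of j w'] \<open>x = ER i {u, w}\<close> \<open>i < 6\<close>
        \<open>u \<in> V\<close> \<open>w \<in> V\<close> by (auto simp: bbase_VR_ER)
  next
    case (brother j v)
    then show ?thesis
      using same[of i u] same[of i w] \<open>x = ER i {u, w}\<close> \<open>i < 6\<close> \<open>u \<in> V\<close> \<open>w \<in> V\<close>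
        \<open>c u \<noteq> c w\<close>
      by (auto simp: bbase_VR_ER bbase_VR_Br)
  qed
next
  case (brother i v)
  show ?thesis
    using y
  proof (cases rule: V23_cases)
    case (edge j u w)
    then show ?thesis
      using same[of j u] same[of j w] \<open>x = Br i v\<close> by (auto simp: bbase_VR_ER bbase_VR_Br)
  next
    case (brother j w)
    then show ?thesis
      using same[of i v] \<open>x = Br i v\<close> \<open>i < 6\<close> \<open>v \<in> V\<close> by (auto simp: bbase_VR_Br)
  qed
qed

lemma V23_star_vec_inj:
  assumes "x \<in> bverts V E" "is_V23 x" "y \<in> bverts V E" "is_V23 y"
    and "\<forall>k<3. star_vec x k = star_vec y k"
  shows "x = y"
proof (rule V23_eq_if_same_VR_neighbours[OF assms(1-4)])
  fix i :: nat and v assume "i < 6" "v \<in> V"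
  then show "bbase (VR i v) x \<longleftrightarrow> bbase (VR i v) y"
    using V23_star_vec_eq_depth_iff assms colour_lt by metis
qed

lemma V23_star_vec_ex_less:
  assumes "x \<in> bverts V E" "is_V23 x" "y \<in> bverts V E" "is_V23 y" "x \<noteq> y"
  shows "\<exists>k<3. star_vec x k < star_vec y k"
proof -
  have "\<exists>k\<in>{..<3}. star_vec x k \<noteq> star_vec y k" using V23_star_vec_inj assms by auto
  then show ?thesis using sum_eq_ex_less[of "{..<3}" "star_vec x" "star_vec y"]
    V23_star_vec_coords[OF assms(1,2)] V23_star_vec_coords[OF assms(3,4)] by auto
qed

lemma rep_star_vertex: "is_star_vertex x \<Longrightarrow> rep x = spider_star leg_length (star_vec x)"
  by (auto simp: is_star_vertex_def is_V23_def rep_def)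

lemma path_vec_le: "j < 3 \<Longrightarrow> path_vec j k \<le> 2"
  by (simp add: path_vec_def)

lemma V23_star_vec_bounds:
  "x \<in> bverts V E \<Longrightarrow> is_V23 x \<Longrightarrow> k < 3 \<Longrightarrow>
    3 \<le> star_vec x k \<and> star_vec x k \<le> 3 * depth_bound"
  using V23_star_vec_coords by blast

lemma star_vec_le_leg_length:
  assumes "x \<in> bverts V E" "is_star_vertex x"
  shows "\<forall>k<3. star_vec x k \<le> leg_length"
proof (intro allI impI)
  fix k :: nat assume "k < 3"
  show "star_vec x k \<le> leg_length"
  proof (cases "is_V23 x")
    case True
    then show ?thesis using V23_star_vec_bounds[OF assms(1) True \<open>k < 3\<close>] by (simp add: leg_length_def)
  next
    case False
    then obtain j where "x = XP j" "j < 3" using assms by (auto simp: is_star_vertex_def bverts_def)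
    then show ?thesis using path_vec_le[of j k] by (simp add: star_vec_def leg_length_def depth_bound_def)
  qed
qed

lemma path_vec_le_V23:
  assumes "XP j \<in> bverts V E" "y \<in> bverts V E" "is_V23 y"
  shows "\<forall>k<3. path_vec j k \<le> star_vec y k"
proof (intro allI impI)
  fix k :: nat assume "k < 3"
  have "j < 3" using assms(1) by (auto simp: bverts_def)
  then show "path_vec j k \<le> star_vec y k"
    using V23_star_vec_bounds[OF assms(2,3) \<open>k < 3\<close>] path_vec_le[of j k] by simp
qed

lemma badj_iff_overlap_stars:
  assumes x: "x \<in> bverts V E" "is_star_vertex x" and y: "y \<in> bverts V E" "is_star_vertex y"
    and "x \<noteq> y"
  shows "badj V E x y \<longleftrightarrow> overlap (rep x) (rep y)"
proof -
  have overlap: "overlap (rep x) (rep y) \<longleftrightarrow>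
      (\<exists>k<3. star_vec x k < star_vec y k) \<and> (\<exists>k<3. star_vec y k < star_vec x k)"
    using overlap_spider_stars star_vec_le_leg_length x y by (simp add: rep_star_vertex)
  show ?thesis
  proof (cases "is_V23 x \<and> is_V23 y")
    case True
    then show ?thesis
      using overlap V23_star_vec_ex_less x y \<open>x \<noteq> y\<close> by (auto simp: badj_def bbase_def)
  next
    case False
    have "\<not> badj V E x y"
      using False x(2) y(2) by (auto simp: badj_def bbase_def is_star_vertex_def is_V23_def)
    moreover have "(\<forall>k<3. star_vec x k \<le> star_vec y k) \<or> (\<forall>k<3. star_vec y k \<le> star_vec x k)"
    proof -
      consider i where "x = XP i" "is_V23 y" | j where "y = XP j" "is_V23 x"
        | i j where "x = XP i" "y = XP j"
        using False x(2) y(2) by (auto simp: is_star_vertex_def)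
      then show ?thesis
      proof cases
        case 1 then show ?thesis using path_vec_le_V23 x y by (simp add: star_vec_def)
      next
        case 2 then show ?thesis using path_vec_le_V23 x y by (simp add: star_vec_def)
      next
        case 3 then show ?thesis by (cases "i \<le> j") (auto simp: star_vec_def path_vec_def)
      qed
    qed
    ultimately show ?thesis using overlap by (auto simp: not_less[symmetric])
  qed
qed

lemma overlap_VR_star:
  assumes "v \<in> V" "i < 6" "y \<in> bverts V E" "is_star_vertex y"
  shows "overlap (rep (VR i v)) (rep y) \<longleftrightarrow> star_vec y (c v) = depth i v"
proof -
  have "depth i v + 1 \<le> leg_length" "1 \<le> depth i v" "c v < 3"
    using depth_bounds[OF assms(1,2)] colour_lt[OF assms(1)] by (auto simp: leg_length_def)
  moreover have "rep (VR i v) = leg_segment leg_length (c v) (depth i v) (depth i v + 1)"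
    by (simp add: rep_def)
  ultimately show ?thesis
    using overlap_spider_star_leg_segment[of "depth i v" "depth i v + 1" leg_length "c v" "star_vec y"]
    by (auto simp: rep_star_vertex[OF assms(4)] overlap_commute)
qed

lemma overlap_leg_star:
  assumes "k < 2" "y \<in> bverts V E" "is_star_vertex y"
  shows "overlap (leg_segment leg_length k 1 leg_length) (rep y)"
proof -
  have "1 \<le> star_vec y k \<and> star_vec y k < leg_length"
  proof (cases "is_V23 y")
    case True
    then show ?thesis using V23_star_vec_bounds[OF assms(2) True, of k] assms(1) by (simp add: leg_length_def)
  next
    case False
    then obtain j where "y = XP j" using assms(3) by (auto simp: is_star_vertex_def)
    then show ?thesis using assms(1) by (simp add: star_vec_def path_vec_def leg_length_def depth_bound_def)
  qed
  then show ?thesis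
    using overlap_spider_star_leg_segment[of 1 leg_length leg_length k "star_vec y"] assms(1)
    by (auto simp: rep_star_vertex[OF assms(3)] overlap_commute leg_length_def)
qed

lemma badj_iff_overlap_segment_star:
  assumes x: "x \<in> bverts V E" "\<not> is_star_vertex x" and y: "y \<in> bverts V E" "is_star_vertex y"
  shows "badj V E x y \<longleftrightarrow> overlap (rep x) (rep y)"
proof -
  consider i v where "x = VR i v" "i < 6" "v \<in> V" | "x = VS" | "x = VB"
    using x by (cases x) (auto simp: is_star_vertex_def is_V23_def bverts_def)
  then show ?thesis
  proof cases
    case 1
    have "badj V E x y \<longleftrightarrow> bbase (VR i v) y"
      using 1 x y by (auto simp: badj_def bbase_def is_star_vertex_def is_V23_def)
    also have "\<dots> \<longleftrightarrow> star_vec y (c v) = depth i v"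
    proof (cases "is_V23 y")
      case False
      then obtain j where "y = XP j" "j < 3" using y by (auto simp: is_star_vertex_def bverts_def)
      then show ?thesis using depth_bounds[OF 1(3,2)] path_vec_le[of j "c v"]
        by (auto simp: bbase_def is_V23_def star_vec_def)
    qed (use V23_star_vec_eq_depth_iff 1 y in blast)
    also have "\<dots> \<longleftrightarrow> overlap (rep x) (rep y)" using overlap_VR_star 1 y by simp
    finally show ?thesis .
  next
    case 2
    then show ?thesis using overlap_leg_star[of 0 y] x y
      by (auto simp: badj_def bbase_def is_star_vertex_def rep_def)
  next
    case 3
    then show ?thesis using overlap_leg_star[of 1 y] x y
      by (auto simp: badj_def bbase_def is_star_vertex_def rep_def)
  qed
qed

lemma segment_vertices_not_adjacent:
  assumes "\<not> is_star_vertex x" "\<not> is_star_vertex y"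
  shows "\<not> badj V E x y"
  using assms by (cases x; cases y) (auto simp: badj_def bbase_def is_star_vertex_def is_V23_def)

lemma segment_vertices_not_overlap:
  assumes x: "x \<in> bverts V E" "\<not> is_star_vertex x" and y: "y \<in> bverts V E" "\<not> is_star_vertex y"
    and "x \<noteq> y"
  shows "\<not> overlap (rep x) (rep y)"
proof -
  have VR: "1 \<le> depth i v \<and> depth i v + 1 \<le> leg_length" if "VR i v \<in> bverts V E" for i v
  proof -
    have "v \<in> V" "i < 6" using that by (auto simp: bverts_def)
    then show ?thesis using depth_bounds[of v i] by (simp add: leg_length_def)
  qed
  have VR_VR: "depth i v + 1 < depth j w \<or> depth j w + 1 < depth i v"
    if "VR i v \<in> bverts V E" "VR j w \<in> bverts V E" "VR i v \<noteq> VR j w" for i v j w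
  proof -
    have "depth i v \<noteq> depth j w" using that depth_eq_iff by (auto simp: bverts_def)
    then show ?thesis unfolding depth_def by presburger
  qed
  show ?thesis
    using x y \<open>x \<noteq> y\<close>
    by (cases x; cases y)
      (auto simp: is_star_vertex_def is_V23_def rep_def intro!: not_overlap_leg_segments dest: VR VR_VR)
qed

lemma badj_iff_overlap_rep:
  assumes x: "x \<in> bverts V E" and y: "y \<in> bverts V E" and "x \<noteq> y"
  shows "badj V E x y \<longleftrightarrow> overlap (rep x) (rep y)"
proof (cases "is_star_vertex x"; cases "is_star_vertex y")
  assume "is_star_vertex x" "is_star_vertex y"
  then show ?thesis using badj_iff_overlap_stars x y \<open>x \<noteq> y\<close> by blast
next
  assume "is_star_vertex x" "\<not> is_star_vertex y"
  then show ?thesis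
    using badj_iff_overlap_segment_star[OF y _ x] overlap_commute by (auto simp: badj_def)
next
  assume "\<not> is_star_vertex x" "is_star_vertex y"
  then show ?thesis using badj_iff_overlap_segment_star x y by blast
next
  assume "\<not> is_star_vertex x" "\<not> is_star_vertex y"
  then show ?thesis
    using segment_vertices_not_adjacent segment_vertices_not_overlap x y \<open>x \<noteq> y\<close> by blast
qed

lemma subtree_rep:
  assumes "x \<in> bverts V E"
  shows "subtree (spider_nodes leg_length) (spider_edge leg_length) (rep x)"
proof (cases "is_star_vertex x")
  case True
  then show ?thesis using subtree_spider_star by (simp add: rep_star_vertex)
next
  case False
  have "1 \<le> leg_length" by (simp add: leg_length_def)
  consider i v where "x = VR i v" "i < 6" "v \<in> V" | "x = VS" | "x = VB"
    using assms False by (cases x) (auto simp: is_star_vertex_def is_V23_def bverts_def)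
  then show ?thesis
  proof cases
    case 1
    then have "1 \<le> depth i v" "depth i v + 1 \<le> leg_length" "c v < 3"
      using depth_bounds[of v i] colour_lt by (auto simp: leg_length_def)
    then show ?thesis using 1 subtree_leg_segment by (simp add: rep_def)
  qed (use \<open>1 \<le> leg_length\<close> subtree_leg_segment in \<open>simp_all add: rep_def\<close>)
qed

end

theorem lemma5:
  fixes V :: "'a set" and E :: "'a \<Rightarrow> 'a \<Rightarrow> bool"
  assumes "graph V E" and "three_connected V E" and "three_colourable V E"
  shows "\<exists>(TN :: nat set) TE (S :: 'a bv \<Rightarrow> nat set).
           tree TN TE \<and> card (leaves TN TE) = 3 \<and>
           (\<forall>x\<in>bverts V E. subtree TN TE (S x)) \<and>
           (\<forall>x\<in>bverts V E. \<forall>y\<in>bverts V E. x \<noteq> y \<longrightarrow>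
              (badj V E x y \<longleftrightarrow> overlap (S x) (S y)))"
proof -
  obtain c :: "'a \<Rightarrow> nat"
    where c: "\<forall>v\<in>V. c v < 3" "\<forall>u\<in>V. \<forall>v\<in>V. E u v \<longrightarrow> c u \<noteq> c v"
    using assms(3) unfolding three_colourable_def by blast
  obtain g where g: "bij_betw g V {..<card V}"
    using assms(1) ex_bij_betw_finite_nat unfolding graph_def atLeast0LessThan by blast
  interpret numbered_coloured_graph V E c g
    using assms(1) c bij_betw_imp_inj_on[OF g] bij_betw_apply[OF g] by unfold_locales auto
  show ?thesis
    using tree_spider card_leaves_spider[of leg_length] subtree_rep badj_iff_overlap_rep
    by (intro exI[of _ "spider_nodes leg_length"] exI[of _ "spider_edge leg_length"] exI[of _ rep])
      (simp add: leg_length_def)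
qed

end
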